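(* Under the standing assumptions, for every $j$ with $1\le j\le n$ and every $z\in\mathbb C$, \begin{align*} \widetilde\alpha_2^{(2j+1)}(z)&=\widetilde\alpha_2^{(2j-1)}(z)-(z-a)\,\Theta_{1,j}^*(\bar z)\,\widehat K_{1,j}^{-1}\,\Gamma_{1,j}(a),\\ \widetilde\beta_2^{(2j+1)}(z)&=\widetilde\beta_2^{(2j-1)}(z)+(z-a)\,\Theta_{1,j}^*(\bar z)\,\widehat K_{1,j}^{-1}\,\Theta_{1,j}(a),\\ \widetilde\gamma_2^{(2j+1)}(z)&=\widetilde\gamma_2^{(2j-1)}(z)-(z-a)\,\Gamma_{1,j}^*(\bar z)\,\widehat K_{1,j}^{-1}\,\Gamma_{1,j}(a),\\ \widetilde\delta_2^{(2j+1)}(z)&=\widetilde\delta_2^{(2j-1)}(z)+(z-a)\,\Gamma_{1,j}^*(\bar z)\,\widehat K_{1,j}^{-1}\,\Theta_{1,j}(a). \end{align*}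
   Context: Let $q,n\in\mathbb N$ and let $a<b$ be real numbers. All matrices are complex; $I_q$, $0_q$ are the $q\times q$ identity and zero matrices; for a matrix-valued function $F$, $F^*(\bar z)$ means $(F(\bar z))^*$. Let $s_0,\dots,s_{2n+1}$ be Hermitian $q\times q$ matrices. Define $K_{1,j}:=(bs_{l+k}-s_{l+k+1})_{l,k=0}^{j}$ and assume (standing assumption) that $K_{1,n}$ is positive definite. Let $T_0:=0_q$ and, for $j\ge1$, let $T_j$ be the $(j+1)\times(j+1)$ block matrix (blocks of size $q\times q$) with $I_q$ in the block positions $(l+1,l)$, $l=0,\dots,j-1$, and $0_q$ elsewhere; $R_j(z):=(I_{(j+1)q}-zT_j)^{-1}$; $v_j:=\mathrm{col}(I_q,0_q,\dots,0_q)\in\mathbb C^{(j+1)q\times q}$. Let $\widetilde u_{1,j}:=\mathrm{col}(s_0,s_1-bs_0,\dots,s_j-bs_{j-1})\in\mathbb C^{(j+1)q\times q}$ ($\widetilde u_{1,0}=s_0$), and for $j\ge1$ let $\widetilde Y_{1,j}:=\mathrm{col}(bs_j-s_{j+1},\dots,bs_{2j-1}-s_{2j})$. Schur complements: $\widehat K_{1,0}:=bs_0-s_1$, $\widehat K_{1,j}:=bs_{2j}-s_{2j+1}-\widetilde Y_{1,j}^*K_{1,j-1}^{-1}\widetilde Y_{1,j}$ ($j\ge1$). Polynomials: $\Gamma_{1,0}:=I_q$, $\Theta_{1,0}:=s_0$, and for $j\ge1$: $\Gamma_{1,j}(z):=(-\widetilde Y_{1,j}^*K_{1,j-1}^{-1},\,I_q)R_j(z)v_j$,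 $\Theta_{1,j}(z):=(-\widetilde Y_{1,j}^*K_{1,j-1}^{-1},\,I_q)R_j(z)\widetilde u_{1,j}$. For $0\le j\le n$ the $2q\times2q$ matrix polynomial $\widetilde U_2^{(2j+1)}=\begin{pmatrix}\widetilde\alpha_2^{(2j+1)}&\widetilde\beta_2^{(2j+1)}\\ \widetilde\gamma_2^{(2j+1)}&\widetilde\delta_2^{(2j+1)}\end{pmatrix}$ is defined by $\widetilde\alpha_2^{(2j+1)}(z)=I_q-(z-a)\widetilde u_{1,j}^*R_j^*(\bar z)K_{1,j}^{-1}R_j(a)v_j$, $\widetilde\beta_2^{(2j+1)}(z)=(z-a)\widetilde u_{1,j}^*R_j^*(\bar z)K_{1,j}^{-1}R_j(a)\widetilde u_{1,j}$, $\widetilde\gamma_2^{(2j+1)}(z)=-(z-a)v_j^*R_j^*(\bar z)K_{1,j}^{-1}R_j(a)v_j$, $\widetilde\delta_2^{(2j+1)}(z)=I_q+(z-a)v_j^*R_j^*(\bar z)K_{1,j}^{-1}R_j(a)\widetilde u_{1,j}$. *)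

theory Defs
  imports "Jordan_Normal_Form.Schur_Decomposition"
begin

text \<open>All matrices are complex Jordan_Normal_Form matrices with explicit dimensions.
  The block size is q; a block matrix with m block rows and k block columns
  is given by its blocks F l k (each q x q).\<close>

definition blk :: "nat \<Rightarrow> nat \<Rightarrow> nat \<Rightarrow> (nat \<Rightarrow> nat \<Rightarrow> complex mat) \<Rightarrow> complex mat" where
  "blk q m k F = mat (m * q) (k * q) (\<lambda>(r, c). F (r div q) (c div q) $$ (r mod q, c mod q))"

definition hcat :: "complex mat \<Rightarrow> complex mat \<Rightarrow> complex mat" where
  "hcat A B = mat (dim_row A) (dim_col A + dim_col B)
     (\<lambda>(r, c). if c < dim_col A then A $$ (r, c) else B $$ (r, c - dim_col A))"

definition minv :: "complex mat \<Rightarrow> complex mat" where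
  "minv A = (SOME B. B \<in> carrier_mat (dim_row A) (dim_row A) \<and> A * B = 1\<^sub>m (dim_row A)
                      \<and> B * A = 1\<^sub>m (dim_row A))"

definition hermitian_mat :: "complex mat \<Rightarrow> bool" where
  "hermitian_mat A \<longleftrightarrow> square_mat A \<and> mat_adjoint A = A"

definition pos_def_mat :: "complex mat \<Rightarrow> bool" where
  "pos_def_mat A \<longleftrightarrow> hermitian_mat A \<and>
     (\<forall>x \<in> carrier_vec (dim_row A). x \<noteq> 0\<^sub>v (dim_row A) \<longrightarrow> 0 < Re ((A *\<^sub>v x) \<bullet>c x))"

definition K1 :: "nat \<Rightarrow> real \<Rightarrow> (nat \<Rightarrow> complex mat) \<Rightarrow> nat \<Rightarrow> complex mat" where
  "K1 q b s j = blk q (j+1) (j+1) (\<lambda>l k. complex_of_real b \<cdot>\<^sub>m s (l+k) - s (l+k+1))"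

definition Tm :: "nat \<Rightarrow> nat \<Rightarrow> complex mat" where
  "Tm q j = blk q (j+1) (j+1) (\<lambda>l k. if l = k + 1 then 1\<^sub>m q else 0\<^sub>m q q)"

definition Rm :: "nat \<Rightarrow> nat \<Rightarrow> complex \<Rightarrow> complex mat" where
  "Rm q j z = minv (1\<^sub>m ((j+1) * q) - z \<cdot>\<^sub>m Tm q j)"

definition vm :: "nat \<Rightarrow> nat \<Rightarrow> complex mat" where
  "vm q j = blk q (j+1) 1 (\<lambda>l k. if l = 0 then 1\<^sub>m q else 0\<^sub>m q q)"

definition u1 :: "nat \<Rightarrow> real \<Rightarrow> (nat \<Rightarrow> complex mat) \<Rightarrow> nat \<Rightarrow> complex mat" where
  "u1 q b s j = blk q (j+1) 1
     (\<lambda>l k. if l = 0 then s 0 else s l - complex_of_real b \<cdot>\<^sub>m s (l - 1))"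

definition Y1 :: "nat \<Rightarrow> real \<Rightarrow> (nat \<Rightarrow> complex mat) \<Rightarrow> nat \<Rightarrow> complex mat" where
  "Y1 q b s j = blk q j 1 (\<lambda>l k. complex_of_real b \<cdot>\<^sub>m s (j+l) - s (j+l+1))"

definition Khat1 :: "nat \<Rightarrow> real \<Rightarrow> (nat \<Rightarrow> complex mat) \<Rightarrow> nat \<Rightarrow> complex mat" where
  "Khat1 q b s j = (if j = 0 then complex_of_real b \<cdot>\<^sub>m s 0 - s 1
     else (complex_of_real b \<cdot>\<^sub>m s (2*j) - s (2*j+1))
           - mat_adjoint (Y1 q b s j) * minv (K1 q b s (j-1)) * Y1 q b s j)"

definition rowm :: "nat \<Rightarrow> real \<Rightarrow> (nat \<Rightarrow> complex mat) \<Rightarrow> nat \<Rightarrow> complex mat" where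
  "rowm q b s j = hcat (- (mat_adjoint (Y1 q b s j) * minv (K1 q b s (j-1)))) (1\<^sub>m q)"

definition Gamma1 :: "nat \<Rightarrow> real \<Rightarrow> (nat \<Rightarrow> complex mat) \<Rightarrow> nat \<Rightarrow> complex \<Rightarrow> complex mat" where
  "Gamma1 q b s j z = (if j = 0 then 1\<^sub>m q else rowm q b s j * Rm q j z * vm q j)"

definition Theta1 :: "nat \<Rightarrow> real \<Rightarrow> (nat \<Rightarrow> complex mat) \<Rightarrow> nat \<Rightarrow> complex \<Rightarrow> complex mat" where
  "Theta1 q b s j z = (if j = 0 then s 0 else rowm q b s j * Rm q j z * u1 q b s j)"

text \<open>alpha2 q a b s j z is tilde-alpha_2^{(2j+1)}(z), etc.\<close>
definition alpha2 :: "nat \<Rightarrow> real \<Rightarrow> real \<Rightarrow> (nat \<Rightarrow> complex mat) \<Rightarrow> nat \<Rightarrow> complex \<Rightarrow> complex mat" where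
  "alpha2 q a b s j z = 1\<^sub>m q - (z - complex_of_real a) \<cdot>\<^sub>m
     (mat_adjoint (u1 q b s j) * mat_adjoint (Rm q j (cnj z)) * minv (K1 q b s j)
       * Rm q j (complex_of_real a) * vm q j)"

definition beta2 :: "nat \<Rightarrow> real \<Rightarrow> real \<Rightarrow> (nat \<Rightarrow> complex mat) \<Rightarrow> nat \<Rightarrow> complex \<Rightarrow> complex mat" where
  "beta2 q a b s j z = (z - complex_of_real a) \<cdot>\<^sub>m
     (mat_adjoint (u1 q b s j) * mat_adjoint (Rm q j (cnj z)) * minv (K1 q b s j)
       * Rm q j (complex_of_real a) * u1 q b s j)"

definition gamma2 :: "nat \<Rightarrow> real \<Rightarrow> real \<Rightarrow> (nat \<Rightarrow> complex mat) \<Rightarrow> nat \<Rightarrow> complex \<Rightarrow> complex mat" where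
  "gamma2 q a b s j z = - ((z - complex_of_real a) \<cdot>\<^sub>m
     (mat_adjoint (vm q j) * mat_adjoint (Rm q j (cnj z)) * minv (K1 q b s j)
       * Rm q j (complex_of_real a) * vm q j))"

definition delta2 :: "nat \<Rightarrow> real \<Rightarrow> real \<Rightarrow> (nat \<Rightarrow> complex mat) \<Rightarrow> nat \<Rightarrow> complex \<Rightarrow> complex mat" where
  "delta2 q a b s j z = 1\<^sub>m q + (z - complex_of_real a) \<cdot>\<^sub>m
     (mat_adjoint (vm q j) * mat_adjoint (Rm q j (cnj z)) * minv (K1 q b s j)
       * Rm q j (complex_of_real a) * u1 q b s j)"

end

theory Submission
  imports Defs
begin

(* Write K_{1,j} in block form [[K_{1,j-1}, Y], [Y^*, D]] with Y = Y_{1,j} and D = b s_{2j} - s_{2j+1}.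
   K_{1,j-1} and K_{1,j} are leading blocks of the positive definite K_{1,n}, hence invertible, and then
   so is the Schur complement Khat_{1,j}, with
     K_{1,j}^{-1} = P^* K_{1,j-1}^{-1} P + W^* Khat_{1,j}^{-1} W,   W = (-Y^* K_{1,j-1}^{-1}, I_q),
   where P = (I, 0) truncates to the first j blocks. Truncation intertwines the resolvents,
   P R_j(w) = R_{j-1}(w) P, and maps u_{1,j}, v_j to u_{1,j-1}, v_{j-1}, while W R_j(w) u_{1,j} and
   W R_j(w) v_j are Theta_{1,j}(w) and Gamma_{1,j}(w). Substituting the block formula into the four
   entries of U_2^{(2j+1)} therefore yields the entries of U_2^{(2j-1)} plus the stated corrections. *)

section \<open>Adjoints and inverses\<close>

lemma adjoint_dims [simp]:
  "dim_row (mat_adjoint A) = dim_col A" "dim_col (mat_adjoint A) = dim_row A"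
  by (simp_all add: mat_adjoint_def)

lemma adjoint_index [simp]:
  "i < dim_col A \<Longrightarrow> k < dim_row A \<Longrightarrow> mat_adjoint A $$ (i, k) = cnj (A $$ (k, i))"
  by (simp add: mat_adjoint_def mat_of_rows_def)

lemma adjoint_carrier [simp]: "A \<in> carrier_mat m k \<Longrightarrow> mat_adjoint A \<in> carrier_mat k m"
  by (intro carrier_matI) (simp_all only: adjoint_dims carrier_matD)

lemma adjoint_adjoint [simp]: "mat_adjoint (mat_adjoint (A :: complex mat)) = A"
  by (rule eq_matI) auto

lemma adjoint_one [simp]: "mat_adjoint (1\<^sub>m n :: complex mat) = 1\<^sub>m n"
  by (rule eq_matI) auto

lemma adjoint_mult:
  fixes A B :: "complex mat"
  assumes "A \<in> carrier_mat m k" and "B \<in> carrier_mat k l"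
  shows "mat_adjoint (A * B) = mat_adjoint B * mat_adjoint A"
  using assms by (intro eq_matI) (auto simp: scalar_prod_def cnj_sum intro!: sum.cong)


(* Ring laws with dimension equalities as side conditions: unlike the carrier_mat versions,
   simp can discharge these from the dimensions of the factors. *)

lemma mult_assoc_dims:
  "dim_col A = dim_row B \<Longrightarrow> dim_col B = dim_row C \<Longrightarrow> A * B * C = A * (B * C)"
  by (rule assoc_mult_mat[OF carrier_matI carrier_matI carrier_matI]) auto

lemma add_mult_distrib_dims:
  "dim_row B = dim_row A \<Longrightarrow> dim_col B = dim_col A \<Longrightarrow> dim_col A = dim_row C
   \<Longrightarrow> (A + B) * C = A * C + B * (C :: 'a :: semiring_0 mat)"
  by (rule add_mult_distrib_mat[OF carrier_matI carrier_matI carrier_matI]) auto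

lemma mult_add_distrib_dims:
  "dim_row C = dim_row B \<Longrightarrow> dim_col C = dim_col B \<Longrightarrow> dim_col A = dim_row B
   \<Longrightarrow> A * (B + C) = A * B + A * (C :: 'a :: semiring_0 mat)"
  by (rule mult_add_distrib_mat[OF carrier_matI carrier_matI carrier_matI]) auto

lemma mult_minus_distrib_dims:
  "dim_row C = dim_row B \<Longrightarrow> dim_col C = dim_col B \<Longrightarrow> dim_col A = dim_row B
   \<Longrightarrow> A * (B - C) = A * B - A * (C :: 'a :: ring mat)"
  by (rule mult_minus_distrib_mat[OF carrier_matI carrier_matI carrier_matI]) auto

lemmas mat_ring_dims = mult_assoc_dims add_mult_distrib_dims mult_add_distrib_dims
  mult_minus_distrib_dims

lemma adjoint_mult_dims:
  "dim_col A = dim_row B \<Longrightarrow> mat_adjoint (A * B) = mat_adjoint B * mat_adjoint (A :: complex mat)"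
  by (rule adjoint_mult[OF carrier_matI carrier_matI]) auto

lemma adjoint_minus_dims:
  "dim_row B = dim_row A \<Longrightarrow> dim_col B = dim_col A
   \<Longrightarrow> mat_adjoint (A - B) = mat_adjoint A - mat_adjoint (B :: complex mat)"
  by (intro eq_matI) auto

lemma mult_mat_vec_zero: "A \<in> carrier_mat n m \<Longrightarrow> A *\<^sub>v 0\<^sub>v m = (0\<^sub>v n :: 'a :: semiring_0 vec)"
  by (auto simp: scalar_prod_def intro!: eq_vecI)

lemma minv_inverse:
  fixes A :: "complex mat"
  assumes A: "A \<in> carrier_mat n n" and det: "det A \<noteq> 0"
  shows "minv A \<in> carrier_mat n n" and "A * minv A = 1\<^sub>m n" and "minv A * A = 1\<^sub>m n"
proof -
  obtain B where "B \<in> carrier_mat n n \<and> A * B = 1\<^sub>m n \<and> B * A = 1\<^sub>m n"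
    using det_non_zero_imp_unit[OF A det] unfolding Units_def by (auto simp: ring_mat_simps)
  then have "minv A \<in> carrier_mat n n \<and> A * minv A = 1\<^sub>m n \<and> minv A * A = 1\<^sub>m n"
    unfolding minv_def using A by (metis (mono_tags, lifting) carrier_matD(1) someI)
  then show "minv A \<in> carrier_mat n n" "A * minv A = 1\<^sub>m n" "minv A * A = 1\<^sub>m n"
    by simp_all
qed

lemma minv_eqI:
  fixes A B :: "complex mat"
  assumes A: "A \<in> carrier_mat n n" and B: "B \<in> carrier_mat n n" and AB: "A * B = 1\<^sub>m n"
  shows "minv A = B"
proof -
  have "det A \<noteq> 0" using det_mult[OF A B] AB by auto
  note inv = minv_inverse[OF A this]
  have "minv A = (minv A * A) * B" using inv(1) A B by (simp add: AB)
  then show ?thesis using B by (simp add: inv(3))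
qed

lemma minv_hermitian:
  fixes A :: "complex mat"
  assumes A: "A \<in> carrier_mat n n" and det: "det A \<noteq> 0" and herm: "mat_adjoint A = A"
  shows "mat_adjoint (minv A) = minv A"
proof -
  note inv = minv_inverse[OF A det]
  have "A * mat_adjoint (minv A) = 1\<^sub>m n"
    using A inv by (metis adjoint_mult adjoint_one herm)
  then show ?thesis using minv_eqI[OF A adjoint_carrier[OF inv(1)]] by simp
qed


section \<open>The inverse of a Hermitian block matrix\<close>

(* Kj = [[lead, off], [off^*, trail]] with respect to the splitting given by P and Q;
   schur_row is the block row (-off^* lead^{-1}, I). *)

locale hermitian_block_split =
  fixes P Q Kj :: "complex mat" and N q M :: nat
  assumes P_carrier: "P \<in> carrier_mat N M" and Q_carrier: "Q \<in> carrier_mat q M"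
    and Kj_carrier: "Kj \<in> carrier_mat M M" and Kj_hermitian: "mat_adjoint Kj = Kj"
    and complement: "mat_adjoint P * P + mat_adjoint Q * Q = 1\<^sub>m M"
    and Q_Q_adjoint: "Q * mat_adjoint Q = 1\<^sub>m q" and Q_P_adjoint: "Q * mat_adjoint P = 0\<^sub>m q N"
    and det_lead: "det (P * Kj * mat_adjoint P) \<noteq> 0"
begin

definition lead :: "complex mat" where "lead = P * Kj * mat_adjoint P"
definition off :: "complex mat" where "off = P * Kj * mat_adjoint Q"
definition trail :: "complex mat" where "trail = Q * Kj * mat_adjoint Q"
definition schur_complement :: "complex mat" where
  "schur_complement = trail - mat_adjoint off * minv lead * off"
definition schur_row :: "complex mat" where
  "schur_row = Q - mat_adjoint off * minv lead * P"

lemma lead_carrier: "lead \<in> carrier_mat N N" and off_carrier: "off \<in> carrier_mat N q"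
  and trail_carrier: "trail \<in> carrier_mat q q"
  using P_carrier Q_carrier Kj_carrier by (auto simp: lead_def off_def trail_def intro!: carrier_matI)

lemma minv_lead: "minv lead \<in> carrier_mat N N" "lead * minv lead = 1\<^sub>m N"
  "mat_adjoint (minv lead) = minv lead"
proof -
  have "mat_adjoint lead = lead"
    using P_carrier Kj_carrier by (simp add: lead_def adjoint_mult_dims Kj_hermitian mat_ring_dims)
  then show "minv lead \<in> carrier_mat N N" "lead * minv lead = 1\<^sub>m N" "mat_adjoint (minv lead) = minv lead"
    using minv_inverse[OF lead_carrier] minv_hermitian[OF lead_carrier] det_lead by (simp_all add: lead_def)
qed

lemma lead_cancel: "dim_row X = N \<Longrightarrow> lead * (minv lead * X) = X"
  using lead_carrier minv_lead by (simp add: mult_assoc_dims[symmetric])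

lemma schur_complement_carrier: "schur_complement \<in> carrier_mat q q"
  and schur_row_carrier: "schur_row \<in> carrier_mat q M"
  using P_carrier Q_carrier off_carrier trail_carrier minv_lead(1)
  by (auto simp: schur_complement_def schur_row_def intro!: carrier_matI)

lemma complement_decomp:
  assumes "dim_row X = M"
  shows "X = mat_adjoint P * (P * X) + mat_adjoint Q * (Q * X)"
proof -
  have "X = (mat_adjoint P * P + mat_adjoint Q * Q) * X" using assms by (simp add: complement)
  also have "\<dots> = mat_adjoint P * (P * X) + mat_adjoint Q * (Q * X)"
    using P_carrier Q_carrier assms by (simp add: mat_ring_dims)
  finally show ?thesis .
qed

lemma Kj_mult_adjoint_P: "Kj * mat_adjoint P = mat_adjoint P * lead + mat_adjoint Q * mat_adjoint off"
  and Kj_mult_adjoint_Q: "Kj * mat_adjoint Q = mat_adjoint P * off + mat_adjoint Q * trail"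
  using complement_decomp[of "Kj * mat_adjoint P"] complement_decomp[of "Kj * mat_adjoint Q"]
    P_carrier Q_carrier Kj_carrier
  by (simp_all add: lead_def off_def trail_def mat_ring_dims adjoint_mult_dims Kj_hermitian)

lemma schur_row_adjoint: "mat_adjoint schur_row = mat_adjoint Q - mat_adjoint P * (minv lead * off)"
  using P_carrier Q_carrier off_carrier minv_lead
  by (simp add: schur_row_def adjoint_minus_dims adjoint_mult_dims mat_ring_dims)

lemma Kj_mult_schur_row_adjoint: "Kj * mat_adjoint schur_row = mat_adjoint Q * schur_complement"
proof -
  note carriers = P_carrier Q_carrier Kj_carrier lead_carrier off_carrier trail_carrier minv_lead(1)
  have "Kj * mat_adjoint schur_row = Kj * mat_adjoint Q - (Kj * mat_adjoint P) * (minv lead * off)"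
    using carriers by (simp add: schur_row_adjoint mat_ring_dims)
  also have "\<dots> = (mat_adjoint P * off + mat_adjoint Q * trail)
      - (mat_adjoint P * off + mat_adjoint Q * (mat_adjoint off * minv lead * off))"
    using carriers by (simp add: Kj_mult_adjoint_P Kj_mult_adjoint_Q mat_ring_dims lead_cancel)
  also have "\<dots> = mat_adjoint Q * schur_complement"
    using carriers by (intro eq_matI) (auto simp: schur_complement_def mat_ring_dims)
  finally show ?thesis .
qed

lemma Q_mult_schur_row_adjoint: "Q * mat_adjoint schur_row = 1\<^sub>m q"
proof -
  have "Q * (mat_adjoint P * X) = 0\<^sub>m q (dim_col X)" if "dim_row X = N" for X
    using P_carrier Q_carrier that by (simp add: mult_assoc_dims[symmetric] Q_P_adjoint)
  then show ?thesis
    using P_carrier Q_carrier off_carrier minv_lead(1)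
    by (simp add: schur_row_adjoint mult_minus_distrib_dims Q_Q_adjoint) (rule eq_matI, auto)
qed

lemma det_schur_complement:
  assumes "det Kj \<noteq> 0"
  shows "det schur_complement \<noteq> 0"
proof
  assume "det schur_complement = 0"
  then obtain x where x: "x \<in> carrier_vec q" "x \<noteq> 0\<^sub>v q" and Hx: "schur_complement *\<^sub>v x = 0\<^sub>v q"
    using det_0_iff_vec_prod_zero[OF schur_complement_carrier] by blast
  define y where "y = mat_adjoint schur_row *\<^sub>v x"
  have y: "y \<in> carrier_vec M" using schur_row_carrier by (auto simp: y_def intro!: carrier_vecI)
  have "Kj *\<^sub>v y = (Kj * mat_adjoint schur_row) *\<^sub>v x"
    unfolding y_def
    by (rule assoc_mult_mat_vec[symmetric, OF Kj_carrier adjoint_carrier[OF schur_row_carrier] x(1)])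
  also have "\<dots> = mat_adjoint Q *\<^sub>v (schur_complement *\<^sub>v x)"
    by (simp add: Kj_mult_schur_row_adjoint
        assoc_mult_mat_vec[OF adjoint_carrier[OF Q_carrier] schur_complement_carrier x(1)])
  also have "\<dots> = 0\<^sub>v M" using Q_carrier by (simp add: Hx mult_mat_vec_zero)
  finally have "Kj *\<^sub>v y = 0\<^sub>v M" .
  moreover have "y \<noteq> 0\<^sub>v M"
  proof
    assume "y = 0\<^sub>v M"
    then have "Q *\<^sub>v y = 0\<^sub>v q" using Q_carrier by (simp add: mult_mat_vec_zero)
    moreover have "Q *\<^sub>v y = (Q * mat_adjoint schur_row) *\<^sub>v x"
      unfolding y_def
      by (rule assoc_mult_mat_vec[symmetric, OF Q_carrier adjoint_carrier[OF schur_row_carrier] x(1)])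
    then have "Q *\<^sub>v y = x" using x(1) by (simp add: Q_mult_schur_row_adjoint)
    ultimately show False using x(2) by simp
  qed
  ultimately show False using det_0_iff_vec_prod_zero[OF Kj_carrier] assms y by blast
qed

lemma minv_block_formula:
  assumes "det Kj \<noteq> 0"
  shows "minv Kj = mat_adjoint P * minv lead * P
    + mat_adjoint schur_row * minv schur_complement * schur_row"
proof (rule minv_eqI[OF Kj_carrier])
  note H = minv_inverse[OF schur_complement_carrier det_schur_complement[OF assms]]
  note carriers = P_carrier Q_carrier Kj_carrier lead_carrier off_carrier minv_lead(1)
    schur_complement_carrier schur_row_carrier H(1)
  have schur_cancel: "schur_complement * (minv schur_complement * X) = X" if "dim_row X = q" for X
    using carriers that by (simp add: mult_assoc_dims[symmetric] H(2))
  show "mat_adjoint P * minv lead * P + mat_adjoint schur_row * minv schur_complement * schur_row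
    \<in> carrier_mat M M"
    using carriers by (auto intro!: carrier_matI)
  have "Kj * (mat_adjoint P * minv lead * P + mat_adjoint schur_row * minv schur_complement * schur_row)
      = (Kj * mat_adjoint P) * minv lead * P + (Kj * mat_adjoint schur_row) * minv schur_complement * schur_row"
    using carriers by (simp add: mat_ring_dims)
  also have "\<dots> = mat_adjoint P * P + mat_adjoint Q * (mat_adjoint off * minv lead * P)
      + mat_adjoint Q * schur_row"
    using carriers
    by (simp add: Kj_mult_adjoint_P Kj_mult_schur_row_adjoint mat_ring_dims lead_cancel schur_cancel)
  also have "\<dots> = mat_adjoint P * P + mat_adjoint Q * Q"
    using carriers by (intro eq_matI) (auto simp: schur_row_def mat_ring_dims)
  finally show "Kj * (mat_adjoint P * minv lead * P
      + mat_adjoint schur_row * minv schur_complement * schur_row) = 1\<^sub>m M"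
    by (simp add: complement)
qed

end

lemma adjoint_sandwich_split:
  fixes P W Ki Hi R R' X Z :: "complex mat"
  assumes "P \<in> carrier_mat N M" "W \<in> carrier_mat q M" "Ki \<in> carrier_mat N N" "Hi \<in> carrier_mat q q"
    "R \<in> carrier_mat M M" "R' \<in> carrier_mat M M" "X \<in> carrier_mat M r" "Z \<in> carrier_mat M t"
  shows "mat_adjoint X * mat_adjoint R * (mat_adjoint P * Ki * P + mat_adjoint W * Hi * W) * R' * Z
    = mat_adjoint (P * R * X) * Ki * (P * R' * Z) + mat_adjoint (W * R * X) * Hi * (W * R' * Z)"
  using assms by (simp add: mat_ring_dims adjoint_mult_dims)

section \<open>Block matrices\<close>

lemma pos_def_leading_block_det:
  fixes A B :: "complex mat"
  assumes pd: "pos_def_mat A" and A: "A \<in> carrier_mat n n" and B: "B \<in> carrier_mat k k"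
    and kn: "k \<le> n" and BA: "\<And>i j. i < k \<Longrightarrow> j < k \<Longrightarrow> B $$ (i, j) = A $$ (i, j)"
  shows "det B \<noteq> 0"
proof
  assume "det B = 0"
  then obtain v where v: "v \<in> carrier_vec k" "v \<noteq> 0\<^sub>v k" and Bv: "B *\<^sub>v v = 0\<^sub>v k"
    using det_0_iff_vec_prod_zero[OF B] by blast
  define y where "y = vec n (\<lambda>i. if i < k then v $ i else 0)"
  have y: "y \<in> carrier_vec n" by (simp add: y_def)
  have y_index: "y $ i = (if i < k then v $ i else 0)" if "i < n" for i
    using that by (simp add: y_def)
  have Ay: "(A *\<^sub>v y) $ i = (B *\<^sub>v v) $ i" if i: "i < k" for i
  proof -
    have "(A *\<^sub>v y) $ i = (\<Sum>l = 0..<n. A $$ (i, l) * y $ l)"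
      using A i kn by (simp add: scalar_prod_def y_def)
    also have "\<dots> = (\<Sum>l = 0..<k. B $$ (i, l) * v $ l)"
      using kn i by (intro sum.mono_neutral_cong_right) (auto simp: y_def BA)
    also have "\<dots> = (B *\<^sub>v v) $ i"
      using B v i by (simp add: scalar_prod_def)
    finally show ?thesis .
  qed
  have "(A *\<^sub>v y) \<bullet>c y = (\<Sum>i = 0..<n. (A *\<^sub>v y) $ i * cnj (y $ i))"
    using y by (simp add: scalar_prod_def)
  also have "\<dots> = (\<Sum>i = 0..<k. (B *\<^sub>v v) $ i * cnj (v $ i))"
    using kn by (intro sum.mono_neutral_cong_right) (auto simp: Ay y_index)
  also have "\<dots> = 0" using Bv by simp
  finally have "(A *\<^sub>v y) \<bullet>c y = 0" .
  moreover have "y \<noteq> 0\<^sub>v n"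
  proof
    assume y0: "y = 0\<^sub>v n"
    have "v $ i = 0" if "i < k" for i
      using y_index[of i] that kn y0 by simp
    then show False using v by (metis eq_vecI carrier_vecD index_zero_vec)
  qed
  ultimately show False using pd y A by (auto simp: pos_def_mat_def)
qed

lemma blk_carrier [simp]: "blk q m k F \<in> carrier_mat (m * q) (k * q)"
  by (simp add: blk_def)

lemma blk_dims [simp]: "dim_row (blk q m k F) = m * q" "dim_col (blk q m k F) = k * q"
  by (simp_all add: blk_def)

lemma blk_index [simp]:
  "r < m * q \<Longrightarrow> c < k * q \<Longrightarrow> blk q m k F $$ (r, c) = F (r div q) (c div q) $$ (r mod q, c mod q)"
  by (simp add: blk_def)

lemma block_coordinates: "r < m * q \<Longrightarrow> r div q < m \<and> r mod q < (q :: nat)"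
  by (cases "q = 0") (auto simp: less_mult_imp_div_less)

lemma blk_cong:
  "(\<And>l k. l < m \<Longrightarrow> k < r \<Longrightarrow> F l k = G l k) \<Longrightarrow> blk q m r F = blk q m r G"
  by (rule eq_matI) (auto dest!: block_coordinates)

lemma adjoint_blk:
  assumes "\<And>l k. l < m \<Longrightarrow> k < r \<Longrightarrow> F l k \<in> carrier_mat q q"
  shows "mat_adjoint (blk q m r F) = blk q r m (\<lambda>k l. mat_adjoint (F l k))"
  by (rule eq_matI) (auto dest!: block_coordinates dest: assms)

lemma adjoint_real_combination:
  fixes A B :: "complex mat"
  assumes "A \<in> carrier_mat q q" and "B \<in> carrier_mat q q"
  shows "mat_adjoint (complex_of_real b \<cdot>\<^sub>m A - B) = complex_of_real b \<cdot>\<^sub>m mat_adjoint A - mat_adjoint B"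
  using assms by (intro eq_matI) auto

definition head_proj :: "nat \<Rightarrow> nat \<Rightarrow> complex mat" where
  "head_proj N M = mat N M (\<lambda>(i, k). of_bool (i = k))"

definition tail_proj :: "nat \<Rightarrow> nat \<Rightarrow> complex mat" where
  "tail_proj N q = mat q (N + q) (\<lambda>(i, k). of_bool (k = N + i))"

lemma head_proj_carrier [simp]: "head_proj N M \<in> carrier_mat N M"
  and tail_proj_carrier [simp]: "tail_proj N q \<in> carrier_mat q (N + q)"
  by (simp_all add: head_proj_def tail_proj_def)

lemma proj_dims [simp]:
  "dim_row (head_proj N M) = N" "dim_col (head_proj N M) = M"
  "dim_row (tail_proj N q) = q" "dim_col (tail_proj N q) = N + q"
  by (simp_all add: head_proj_def tail_proj_def)

lemma adjoint_head_proj: "mat_adjoint (head_proj N M) = mat M N (\<lambda>(i, k). of_bool (i = k))"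
  by (rule eq_matI) (auto simp: head_proj_def)

lemma adjoint_tail_proj: "mat_adjoint (tail_proj N q) = mat (N + q) q (\<lambda>(i, k). of_bool (i = N + k))"
  by (rule eq_matI) (auto simp: tail_proj_def)

lemma tail_index_set: "{x. x < q \<and> k = N + x} = (if N \<le> k \<and> k < N + q then {k - N} else ({} :: nat set))"
  by auto

lemma head_proj_mult:
  "N \<le> M \<Longrightarrow> X \<in> carrier_mat M c \<Longrightarrow> head_proj N M * X = mat N c (\<lambda>(i, k). X $$ (i, k))"
  by (rule eq_matI) (auto simp: head_proj_def scalar_prod_def Int_def Collect_conv_if)

lemma mult_head_proj:
  "N \<le> M \<Longrightarrow> X \<in> carrier_mat r N \<Longrightarrow> X * head_proj N M = mat r M (\<lambda>(i, k). if k < N then X $$ (i, k) else 0)"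
  by (rule eq_matI) (auto simp: head_proj_def scalar_prod_def Int_def Collect_conv_if)

lemma mult_adjoint_head_proj:
  "N \<le> M \<Longrightarrow> X \<in> carrier_mat r M \<Longrightarrow> X * mat_adjoint (head_proj N M) = mat r N (\<lambda>(i, k). X $$ (i, k))"
  by (rule eq_matI) (auto simp: adjoint_head_proj scalar_prod_def Int_def Collect_conv_if)

lemma tail_proj_mult:
  "X \<in> carrier_mat (N + q) c \<Longrightarrow> tail_proj N q * X = mat q c (\<lambda>(i, k). X $$ (N + i, k))"
  by (rule eq_matI) (auto simp: tail_proj_def scalar_prod_def Int_def Collect_conv_if)

lemma mult_tail_proj:
  "X \<in> carrier_mat r q \<Longrightarrow> X * tail_proj N q = mat r (N + q) (\<lambda>(i, k). if N \<le> k then X $$ (i, k - N) else 0)"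
  by (rule eq_matI) (auto simp: tail_proj_def scalar_prod_def Int_def tail_index_set)

lemma mult_adjoint_tail_proj:
  "X \<in> carrier_mat r (N + q) \<Longrightarrow> X * mat_adjoint (tail_proj N q) = mat r q (\<lambda>(i, k). X $$ (i, N + k))"
  by (rule eq_matI) (auto simp: adjoint_tail_proj scalar_prod_def Int_def Collect_conv_if)

lemma head_tail_complement:
  "mat_adjoint (head_proj N (N + q)) * head_proj N (N + q) + mat_adjoint (tail_proj N q) * tail_proj N q
    = 1\<^sub>m (N + q)"
  by (rule eq_matI)
    (auto simp: adjoint_head_proj adjoint_tail_proj head_proj_def tail_proj_def scalar_prod_def Int_def
      Collect_conv_if tail_index_set)

lemma tail_proj_isometry: "tail_proj N q * mat_adjoint (tail_proj N q) = 1\<^sub>m q"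
  by (simp add: mult_adjoint_tail_proj[OF tail_proj_carrier]) (rule eq_matI, auto simp: tail_proj_def)

lemma tail_head_orthogonal: "tail_proj N q * mat_adjoint (head_proj N (N + q)) = 0\<^sub>m q N"
  by (simp add: mult_adjoint_head_proj[OF _ tail_proj_carrier]) (rule eq_matI, auto simp: tail_proj_def)

lemma hcat_eq_proj:
  assumes "A \<in> carrier_mat r N" and "B \<in> carrier_mat r q"
  shows "hcat A B = A * head_proj N (N + q) + B * tail_proj N q"
  using assms by (simp add: mult_head_proj mult_tail_proj) (rule eq_matI, auto simp: hcat_def)

lemma proj_blocks:
  assumes X: "X \<in> carrier_mat (N + q) (N + q)"
  shows "head_proj N (N + q) * X * mat_adjoint (head_proj N (N + q)) = mat N N (\<lambda>(i, k). X $$ (i, k))"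
    and "head_proj N (N + q) * X * mat_adjoint (tail_proj N q) = mat N q (\<lambda>(i, k). X $$ (i, N + k))"
    and "tail_proj N q * X * mat_adjoint (tail_proj N q) = mat q q (\<lambda>(i, k). X $$ (N + i, N + k))"
proof -
  have PX: "head_proj N (N + q) * X \<in> carrier_mat N (N + q)"
    and QX: "tail_proj N q * X \<in> carrier_mat q (N + q)"
    using X by (simp_all add: head_proj_mult tail_proj_mult)
  show "head_proj N (N + q) * X * mat_adjoint (head_proj N (N + q)) = mat N N (\<lambda>(i, k). X $$ (i, k))"
    using X by (subst mult_adjoint_head_proj[OF _ PX]) (auto simp: head_proj_mult intro!: eq_matI)
  show "head_proj N (N + q) * X * mat_adjoint (tail_proj N q) = mat N q (\<lambda>(i, k). X $$ (i, N + k))"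
    using X by (subst mult_adjoint_tail_proj[OF PX]) (auto simp: head_proj_mult intro!: eq_matI)
  show "tail_proj N q * X * mat_adjoint (tail_proj N q) = mat q q (\<lambda>(i, k). X $$ (N + i, N + k))"
    using X by (subst mult_adjoint_tail_proj[OF QX]) (auto simp: tail_proj_mult intro!: eq_matI)
qed

section \<open>The block matrices of the moment problem\<close>

lemma Suc_block_dim: "(Suc j + 1) * q = (j + 1) * q + q"
  by simp

lemma block_offset_div_mod [simp]:
  assumes "j < q"
  shows "(j + (q + m * q)) div q = Suc m" and "(j + (q + m * q)) mod q = j"
proof -
  have e: "j + (q + m * q) = j + Suc m * q" by simp
  show "(j + (q + m * q)) div q = Suc m" "(j + (q + m * q)) mod q = j"
    unfolding e using assms by (simp_all del: mult_Suc)
qed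

lemma K1_carrier: "K1 q b s j \<in> carrier_mat ((j + 1) * q) ((j + 1) * q)"
  unfolding K1_def by (rule blk_carrier)

lemma K1_Suc_carrier: "K1 q b s (Suc m) \<in> carrier_mat ((m + 1) * q + q) ((m + 1) * q + q)"
  using K1_carrier[of q b s "Suc m"] by (simp only: Suc_block_dim)

lemma K1_hermitian:
  assumes s: "\<And>i. i \<le> 2 * j + 1 \<Longrightarrow> s i \<in> carrier_mat q q \<and> hermitian_mat (s i)"
  shows "mat_adjoint (K1 q b s j) = K1 q b s j"
proof -
  have entry: "complex_of_real b \<cdot>\<^sub>m s a - s (a + 1) \<in> carrier_mat q q"
    "mat_adjoint (complex_of_real b \<cdot>\<^sub>m s a - s (a + 1)) = complex_of_real b \<cdot>\<^sub>m s a - s (a + 1)"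
    if "a \<le> 2 * j" for a
    using s[of a] s[of "a + 1"] that by (auto simp: adjoint_real_combination hermitian_mat_def)
  have "mat_adjoint (K1 q b s j)
      = blk q (j + 1) (j + 1) (\<lambda>k l. mat_adjoint (complex_of_real b \<cdot>\<^sub>m s (l + k) - s (l + k + 1)))"
    unfolding K1_def by (intro adjoint_blk entry) simp
  also have "\<dots> = K1 q b s j"
    unfolding K1_def
  proof (intro blk_cong)
    fix l k assume "l < j + 1" "k < j + 1"
    then show "mat_adjoint (complex_of_real b \<cdot>\<^sub>m s (k + l) - s (k + l + 1))
      = complex_of_real b \<cdot>\<^sub>m s (l + k) - s (l + k + 1)"
      using entry(2)[of "l + k"] by (simp add: add.commute)
  qed
  finally show ?thesis .
qed

lemma K1_leading_block_det:
  assumes "pos_def_mat (K1 q b s n)" and "m \<le> n"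
  shows "det (K1 q b s m) \<noteq> 0"
proof (rule pos_def_leading_block_det[OF assms(1) K1_carrier K1_carrier])
  show le: "(m + 1) * q \<le> (n + 1) * q" using assms(2) by (intro mult_le_mono1) simp
  show "K1 q b s m $$ (i, k) = K1 q b s n $$ (i, k)" if "i < (m + 1) * q" "k < (m + 1) * q" for i k
  proof -
    have "i < (n + 1) * q" "k < (n + 1) * q" using that le by linarith+
    then show ?thesis using that by (simp add: K1_def)
  qed
qed

lemma K1_Suc_blocks:
  fixes m q :: nat
  defines "N \<equiv> (m + 1) * q"
  assumes q: "0 < q" and sc: "s (2 * Suc m) \<in> carrier_mat q q" "s (2 * Suc m + 1) \<in> carrier_mat q q"
  shows "head_proj N (N + q) * K1 q b s (Suc m) * mat_adjoint (head_proj N (N + q)) = K1 q b s m"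
    and "head_proj N (N + q) * K1 q b s (Suc m) * mat_adjoint (tail_proj N q) = Y1 q b s (Suc m)"
    and "tail_proj N q * K1 q b s (Suc m) * mat_adjoint (tail_proj N q)
      = complex_of_real b \<cdot>\<^sub>m s (2 * Suc m) - s (2 * Suc m + 1)"
  using q sc unfolding proj_blocks[OF K1_Suc_carrier[of q b s m, folded N_def]]
  by (auto simp: K1_def Y1_def N_def ac_simps mult_2 mult_2_right intro!: eq_matI)

lemma head_proj_blk: "head_proj ((m + 1) * q) ((m + 1) * q + q) * blk q (Suc m + 1) k F = blk q (m + 1) k F"
  using blk_carrier[of q "Suc m + 1" k F]
  by (simp only: Suc_block_dim head_proj_mult[OF le_add1]) (rule eq_matI, auto)

lemma pencil_index:
  assumes "i < (j + 1) * q" and "k < (j + 1) * q"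
  shows "(1\<^sub>m ((j + 1) * q) - w \<cdot>\<^sub>m Tm q j) $$ (i, k)
    = (if i = k then 1 else 0) - w * (if i div q = k div q + 1 \<and> i mod q = k mod q then 1 else 0)"
  using assms block_coordinates[OF assms(1)] block_coordinates[OF assms(2)] by (simp add: Tm_def)

lemma pencil_carrier: "1\<^sub>m ((j + 1) * q) - w \<cdot>\<^sub>m Tm q j \<in> carrier_mat ((j + 1) * q) ((j + 1) * q)"
  unfolding Tm_def by (intro minus_carrier_mat smult_carrier_mat blk_carrier)

lemma pencil_det: "det (1\<^sub>m ((j + 1) * q) - w \<cdot>\<^sub>m Tm q j) = 1"
proof -
  let ?A = "1\<^sub>m ((j + 1) * q) - w \<cdot>\<^sub>m Tm q j"
  note A = pencil_carrier[of j q w]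
  have "det ?A = prod_list (diag_mat ?A)"
  proof (rule det_lower_triangular[OF _ A])
    fix i k assume ik: "i < k" "k < (j + 1) * q"
    then have "i div q \<le> k div q" by (simp add: div_le_mono)
    then show "?A $$ (i, k) = 0" using ik pencil_index[of i j q k w] by simp
  qed
  also have "diag_mat ?A = replicate ((j + 1) * q) 1"
  proof (rule nth_equalityI)
    show "length (diag_mat ?A) = length (replicate ((j + 1) * q) 1)"
      by (simp add: diag_mat_def Tm_def)
    fix i assume "i < length (diag_mat ?A)"
    then show "diag_mat ?A ! i = replicate ((j + 1) * q) 1 ! i"
      using pencil_index[of i j q i w] by (simp add: diag_mat_def Tm_def)
  qed
  finally show ?thesis by simp
qed

lemma Rm_inverse:
  shows "Rm q j w \<in> carrier_mat ((j + 1) * q) ((j + 1) * q)"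
    and "(1\<^sub>m ((j + 1) * q) - w \<cdot>\<^sub>m Tm q j) * Rm q j w = 1\<^sub>m ((j + 1) * q)"
    and "Rm q j w * (1\<^sub>m ((j + 1) * q) - w \<cdot>\<^sub>m Tm q j) = 1\<^sub>m ((j + 1) * q)"
proof -
  note pencil_carrier[of j q w]
  moreover have "det (1\<^sub>m ((j + 1) * q) - w \<cdot>\<^sub>m Tm q j) \<noteq> 0"
    by (simp only: pencil_det) simp
  ultimately show "Rm q j w \<in> carrier_mat ((j + 1) * q) ((j + 1) * q)"
    and "(1\<^sub>m ((j + 1) * q) - w \<cdot>\<^sub>m Tm q j) * Rm q j w = 1\<^sub>m ((j + 1) * q)"
    and "Rm q j w * (1\<^sub>m ((j + 1) * q) - w \<cdot>\<^sub>m Tm q j) = 1\<^sub>m ((j + 1) * q)"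
    unfolding Rm_def by (rule minv_inverse)+
qed

lemma head_proj_pencil:
  fixes m q :: nat
  shows "head_proj ((m + 1) * q) ((m + 1) * q + q) * (1\<^sub>m ((m + 1) * q + q) - w \<cdot>\<^sub>m Tm q (Suc m))
    = (1\<^sub>m ((m + 1) * q) - w \<cdot>\<^sub>m Tm q m) * head_proj ((m + 1) * q) ((m + 1) * q + q)"
proof -
  define N where "N = (m + 1) * q"
  have q: "0 < q" if "i < N" for i using that by (cases q) (auto simp: N_def)
  have A1: "1\<^sub>m (N + q) - w \<cdot>\<^sub>m Tm q (Suc m) \<in> carrier_mat (N + q) (N + q)"
    using pencil_carrier[of "Suc m" q w] by (simp only: N_def Suc_block_dim)
  have A0: "1\<^sub>m N - w \<cdot>\<^sub>m Tm q m \<in> carrier_mat N N"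
    using pencil_carrier[of m q w] by (simp only: N_def)
  show ?thesis
    unfolding N_def[symmetric] head_proj_mult[OF le_add1 A1] mult_head_proj[OF le_add1 A0]
  proof (rule eq_matI)
    fix i k assume "i < dim_row (mat N (N + q) (\<lambda>(i, k). if k < N then (1\<^sub>m N - w \<cdot>\<^sub>m Tm q m) $$ (i, k) else 0))"
      and "k < dim_col (mat N (N + q) (\<lambda>(i, k). if k < N then (1\<^sub>m N - w \<cdot>\<^sub>m Tm q m) $$ (i, k) else 0))"
    then have i: "i < N" and k: "k < N + q" by simp_all
    have entry1: "(1\<^sub>m (N + q) - w \<cdot>\<^sub>m Tm q (Suc m)) $$ (i, k)
      = (if i = k then 1 else 0) - w * (if i div q = k div q + 1 \<and> i mod q = k mod q then 1 else 0)"
      using pencil_index[of i "Suc m" q k w, unfolded Suc_block_dim, folded N_def] i k by simp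
    show "mat N (N + q) (\<lambda>(i, k). (1\<^sub>m (N + q) - w \<cdot>\<^sub>m Tm q (Suc m)) $$ (i, k)) $$ (i, k)
      = mat N (N + q) (\<lambda>(i, k). if k < N then (1\<^sub>m N - w \<cdot>\<^sub>m Tm q m) $$ (i, k) else 0) $$ (i, k)"
    proof (cases "k < N")
      case True
      then show ?thesis using i k entry1 pencil_index[of i m q k w, folded N_def] by simp
    next
      case False
      have "i div q < Suc m" using i by (simp add: N_def less_mult_imp_div_less)
      moreover have "Suc m \<le> k div q"
        using False div_le_mono[of "Suc m * q" k q] q[OF i] by (simp add: N_def)
      ultimately show ?thesis using i k False entry1 by simp
    qed
  qed simp_all
qed

lemma head_proj_Rm:
  fixes m q :: nat
  shows "head_proj ((m + 1) * q) ((m + 1) * q + q) * Rm q (Suc m) w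
    = Rm q m w * head_proj ((m + 1) * q) ((m + 1) * q + q)"
proof -
  let ?N = "(m + 1) * q"
  let ?P = "head_proj ?N (?N + q)" and ?R1 = "Rm q (Suc m) w" and ?R0 = "Rm q m w"
  let ?A1 = "1\<^sub>m (?N + q) - w \<cdot>\<^sub>m Tm q (Suc m)" and ?A0 = "1\<^sub>m ?N - w \<cdot>\<^sub>m Tm q m"
  have A1: "?A1 \<in> carrier_mat (?N + q) (?N + q)"
    using pencil_carrier[of "Suc m" q w] by (simp only: Suc_block_dim)
  have A0: "?A0 \<in> carrier_mat ?N ?N" by (rule pencil_carrier)
  have R1: "?R1 \<in> carrier_mat (?N + q) (?N + q)" "?A1 * ?R1 = 1\<^sub>m (?N + q)"
    using Rm_inverse[where j = "Suc m" and q = q and w = w] by (simp_all only: Suc_block_dim)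
  have R0: "?R0 \<in> carrier_mat ?N ?N" "?R0 * ?A0 = 1\<^sub>m ?N"
    using Rm_inverse[where j = m and q = q and w = w] by simp_all
  have P: "?P \<in> carrier_mat ?N (?N + q)" by simp
  have "?R0 * ?P = ?R0 * (?P * (?A1 * ?R1))" using R1(2) by simp
  also have "\<dots> = ?R0 * (?A0 * ?P * ?R1)"
    by (simp only: assoc_mult_mat[OF P A1 R1(1), symmetric] head_proj_pencil)
  also have "\<dots> = (?R0 * ?A0) * (?P * ?R1)"
    by (simp only: assoc_mult_mat[OF A0 P R1(1)] assoc_mult_mat[OF R0(1) A0 mult_carrier_mat[OF P R1(1)]])
  also have "\<dots> = ?P * ?R1" using R0(2) R1(1) by simp
  finally show ?thesis ..
qed

lemma rowm_Suc:
  fixes m q :: nat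
  defines "N \<equiv> (m + 1) * q"
  assumes Ki: "minv (K1 q b s m) \<in> carrier_mat N N"
  shows "rowm q b s (Suc m)
    = tail_proj N q - mat_adjoint (Y1 q b s (Suc m)) * minv (K1 q b s m) * head_proj N (N + q)"
proof -
  let ?A = "mat_adjoint (Y1 q b s (Suc m)) * minv (K1 q b s m)"
  have A: "?A \<in> carrier_mat q N"
    using Ki by (auto simp: Y1_def N_def intro!: carrier_matI)
  have "rowm q b s (Suc m) = - ?A * head_proj N (N + q) + 1\<^sub>m q * tail_proj N q"
    unfolding rowm_def diff_Suc_1 using A by (intro hcat_eq_proj) auto
  also have "\<dots> = - (?A * head_proj N (N + q)) + tail_proj N q"
    using A Ki by simp
  also have "\<dots> = tail_proj N q - ?A * head_proj N (N + q)"
    using A by (intro eq_matI) auto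
  finally show ?thesis .
qed

section \<open>One step of the recursion\<close>

lemma minv_K1_Suc:
  fixes m q :: nat
  defines "N \<equiv> (m + 1) * q"
  defines "P \<equiv> head_proj N (N + q)"
  assumes q: "0 < q"
    and s: "\<forall>i \<le> 2 * (m + 1) + 1. s i \<in> carrier_mat q q \<and> hermitian_mat (s i)"
    and det: "det (K1 q b s m) \<noteq> 0" "det (K1 q b s (Suc m)) \<noteq> 0"
  shows "minv (K1 q b s (Suc m)) = mat_adjoint P * minv (K1 q b s m) * P
      + mat_adjoint (rowm q b s (Suc m)) * minv (Khat1 q b s (Suc m)) * rowm q b s (Suc m)"
    and "minv (K1 q b s m) \<in> carrier_mat N N"
    and "rowm q b s (Suc m) \<in> carrier_mat q (N + q)"
    and "minv (Khat1 q b s (Suc m)) \<in> carrier_mat q q"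
proof -
  let ?Q = "tail_proj N q" and ?Kj = "K1 q b s (Suc m)"
  have Kj: "?Kj \<in> carrier_mat (N + q) (N + q)" unfolding N_def by (rule K1_Suc_carrier)
  have blocks: "P * ?Kj * mat_adjoint P = K1 q b s m"
    "P * ?Kj * mat_adjoint ?Q = Y1 q b s (Suc m)"
    "?Q * ?Kj * mat_adjoint ?Q = complex_of_real b \<cdot>\<^sub>m s (2 * Suc m) - s (2 * Suc m + 1)"
    using K1_Suc_blocks[OF q, of s m b] s[rule_format, of "2 * Suc m"] s[rule_format, of "2 * Suc m + 1"]
    unfolding P_def N_def by simp_all
  interpret B: hermitian_block_split P ?Q ?Kj N q "N + q"
  proof
    show "mat_adjoint ?Kj = ?Kj" using s by (intro K1_hermitian) auto
    show "det (P * ?Kj * mat_adjoint P) \<noteq> 0" unfolding blocks by (rule det(1))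
  qed (simp_all add: P_def Kj head_tail_complement tail_proj_isometry tail_head_orthogonal)
  show Ki: "minv (K1 q b s m) \<in> carrier_mat N N" using B.minv_lead(1) by (simp add: B.lead_def blocks)
  have schur: "B.schur_complement = Khat1 q b s (Suc m)"
    by (simp add: B.schur_complement_def B.lead_def B.off_def B.trail_def blocks Khat1_def)
  have row: "B.schur_row = rowm q b s (Suc m)"
    unfolding B.schur_row_def B.off_def B.lead_def blocks
    unfolding rowm_Suc[OF Ki[unfolded N_def]] P_def N_def ..
  show "minv ?Kj = mat_adjoint P * minv (K1 q b s m) * P
      + mat_adjoint (rowm q b s (Suc m)) * minv (Khat1 q b s (Suc m)) * rowm q b s (Suc m)"
    using B.minv_block_formula[OF det(2)] by (simp only: B.lead_def blocks schur row)
  show "rowm q b s (Suc m) \<in> carrier_mat q (N + q)" using B.schur_row_carrier by (simp only: row)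
  show "minv (Khat1 q b s (Suc m)) \<in> carrier_mat q q"
    using minv_inverse(1)[OF B.schur_complement_carrier B.det_schur_complement[OF det(2)]]
    by (simp only: schur)
qed

lemma K1_inverse_form_Suc:
  fixes m q :: nat and X Z :: "complex mat"
  defines "N \<equiv> (m + 1) * q"
  defines "P \<equiv> head_proj N (N + q)"
  assumes q: "0 < q"
    and s: "\<forall>i \<le> 2 * (m + 1) + 1. s i \<in> carrier_mat q q \<and> hermitian_mat (s i)"
    and det: "det (K1 q b s m) \<noteq> 0" "det (K1 q b s (Suc m)) \<noteq> 0"
    and X: "X \<in> carrier_mat (N + q) r" and Z: "Z \<in> carrier_mat (N + q) t"
  shows "mat_adjoint X * mat_adjoint (Rm q (Suc m) z) * minv (K1 q b s (Suc m)) * Rm q (Suc m) w * Z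
    = mat_adjoint (P * X) * mat_adjoint (Rm q m z) * minv (K1 q b s m) * Rm q m w * (P * Z)
      + mat_adjoint (rowm q b s (Suc m) * Rm q (Suc m) z * X) * minv (Khat1 q b s (Suc m))
        * (rowm q b s (Suc m) * Rm q (Suc m) w * Z)"
proof -
  note inv = minv_K1_Suc[OF q s det, folded N_def P_def]
  have R1: "Rm q (Suc m) v \<in> carrier_mat (N + q) (N + q)" for v
    using Rm_inverse(1)[where j = "Suc m"] by (simp only: N_def Suc_block_dim)
  have R0: "Rm q m v \<in> carrier_mat N N" for v
    using Rm_inverse(1)[where j = m] by (simp only: N_def)
  have P: "P \<in> carrier_mat N (N + q)" by (simp add: P_def)
  have PR: "P * Rm q (Suc m) v = Rm q m v * P" for v
    unfolding P_def N_def by (rule head_proj_Rm)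
  have "mat_adjoint X * mat_adjoint (Rm q (Suc m) z) * minv (K1 q b s (Suc m)) * Rm q (Suc m) w * Z
    = mat_adjoint (P * Rm q (Suc m) z * X) * minv (K1 q b s m) * (P * Rm q (Suc m) w * Z)
      + mat_adjoint (rowm q b s (Suc m) * Rm q (Suc m) z * X) * minv (Khat1 q b s (Suc m))
        * (rowm q b s (Suc m) * Rm q (Suc m) w * Z)"
    unfolding inv(1) by (rule adjoint_sandwich_split[OF P inv(3) inv(2) inv(4) R1 R1 X Z])
  also have "mat_adjoint (P * Rm q (Suc m) z * X) * minv (K1 q b s m) * (P * Rm q (Suc m) w * Z)
    = mat_adjoint (Rm q m z * (P * X)) * minv (K1 q b s m) * (Rm q m w * (P * Z))"
    unfolding PR assoc_mult_mat[OF R0 P X] assoc_mult_mat[OF R0 P Z] ..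
  also have "\<dots> = mat_adjoint (P * X) * mat_adjoint (Rm q m z) * minv (K1 q b s m) * Rm q m w * (P * Z)"
    using X Z R0[of z] R0[of w] inv(2) P by (simp add: mat_ring_dims adjoint_mult_dims)
  finally show ?thesis .
qed

lemma smult_add_regroup:
  fixes A B :: "complex mat"
  assumes "dim_row A = q" "dim_col A = q" "dim_row B = q" "dim_col B = q"
  shows "1\<^sub>m q - c \<cdot>\<^sub>m (A + B) = (1\<^sub>m q - c \<cdot>\<^sub>m A) - c \<cdot>\<^sub>m B"
    and "c \<cdot>\<^sub>m (A + B) = c \<cdot>\<^sub>m A + c \<cdot>\<^sub>m B"
    and "- (c \<cdot>\<^sub>m (A + B)) = - (c \<cdot>\<^sub>m A) - c \<cdot>\<^sub>m B"
    and "1\<^sub>m q + c \<cdot>\<^sub>m (A + B) = (1\<^sub>m q + c \<cdot>\<^sub>m A) + c \<cdot>\<^sub>m B"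
  using assms by (auto intro!: eq_matI simp: algebra_simps)

lemma U2_entries_Suc:
  fixes q m :: nat and a b :: real and s :: "nat \<Rightarrow> complex mat" and z :: complex
  assumes q: "0 < q"
    and s: "\<forall>i \<le> 2 * (m + 1) + 1. s i \<in> carrier_mat q q \<and> hermitian_mat (s i)"
    and det: "det (K1 q b s m) \<noteq> 0" "det (K1 q b s (Suc m)) \<noteq> 0"
  shows "alpha2 q a b s (Suc m) z = alpha2 q a b s m z
            - (z - complex_of_real a) \<cdot>\<^sub>m (mat_adjoint (Theta1 q b s (Suc m) (cnj z))
                 * minv (Khat1 q b s (Suc m)) * Gamma1 q b s (Suc m) (complex_of_real a))
    \<and> beta2 q a b s (Suc m) z = beta2 q a b s m z
            + (z - complex_of_real a) \<cdot>\<^sub>m (mat_adjoint (Theta1 q b s (Suc m) (cnj z))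
                 * minv (Khat1 q b s (Suc m)) * Theta1 q b s (Suc m) (complex_of_real a))
    \<and> gamma2 q a b s (Suc m) z = gamma2 q a b s m z
            - (z - complex_of_real a) \<cdot>\<^sub>m (mat_adjoint (Gamma1 q b s (Suc m) (cnj z))
                 * minv (Khat1 q b s (Suc m)) * Gamma1 q b s (Suc m) (complex_of_real a))
    \<and> delta2 q a b s (Suc m) z = delta2 q a b s m z
            + (z - complex_of_real a) \<cdot>\<^sub>m (mat_adjoint (Gamma1 q b s (Suc m) (cnj z))
                 * minv (Khat1 q b s (Suc m)) * Theta1 q b s (Suc m) (complex_of_real a))"
proof -
  let ?N = "(m + 1) * q"
  have u: "u1 q b s (Suc m) \<in> carrier_mat (?N + q) q" and v: "vm q (Suc m) \<in> carrier_mat (?N + q) q"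
    using blk_carrier[of q "Suc m + 1" 1] by (simp_all only: u1_def vm_def Suc_block_dim mult_1)
  have Pu: "head_proj ?N (?N + q) * u1 q b s (Suc m) = u1 q b s m"
    and Pv: "head_proj ?N (?N + q) * vm q (Suc m) = vm q m"
    unfolding u1_def vm_def by (rule head_proj_blk)+
  have dims: "dim_col (u1 q b s j) = q" "dim_col (vm q j) = q" for j
    by (simp_all add: u1_def vm_def)
  have Theta: "Theta1 q b s (Suc m) w = rowm q b s (Suc m) * Rm q (Suc m) w * u1 q b s (Suc m)"
    and Gamma: "Gamma1 q b s (Suc m) w = rowm q b s (Suc m) * Rm q (Suc m) w * vm q (Suc m)" for w
    by (simp_all add: Theta1_def Gamma1_def)
  note step = K1_inverse_form_Suc[where z = "cnj z" and w = "complex_of_real a", OF q s det]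
  show ?thesis
    unfolding alpha2_def beta2_def gamma2_def delta2_def step[OF u v] step[OF u u] step[OF v v] step[OF v u] Pu Pv
      Theta Gamma
    by (intro conjI smult_add_regroup) (simp_all add: dims)
qed

theorem mainTheorem2:
  fixes q n :: nat and a b :: real and s :: "nat \<Rightarrow> complex mat"
    and j :: nat and z :: complex
  assumes "1 \<le> q" and "1 \<le> n" and "a < b"
    and "\<And>i. i \<le> 2*n+1 \<Longrightarrow> s i \<in> carrier_mat q q \<and> hermitian_mat (s i)"
    and "pos_def_mat (K1 q b s n)"
    and "1 \<le> j" and "j \<le> n"
  shows "alpha2 q a b s j z = alpha2 q a b s (j-1) z
            - (z - complex_of_real a) \<cdot>\<^sub>m (mat_adjoint (Theta1 q b s j (cnj z))
                 * minv (Khat1 q b s j) * Gamma1 q b s j (complex_of_real a))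
    \<and> beta2 q a b s j z = beta2 q a b s (j-1) z
            + (z - complex_of_real a) \<cdot>\<^sub>m (mat_adjoint (Theta1 q b s j (cnj z))
                 * minv (Khat1 q b s j) * Theta1 q b s j (complex_of_real a))
    \<and> gamma2 q a b s j z = gamma2 q a b s (j-1) z
            - (z - complex_of_real a) \<cdot>\<^sub>m (mat_adjoint (Gamma1 q b s j (cnj z))
                 * minv (Khat1 q b s j) * Gamma1 q b s j (complex_of_real a))
    \<and> delta2 q a b s j z = delta2 q a b s (j-1) z
            + (z - complex_of_real a) \<cdot>\<^sub>m (mat_adjoint (Gamma1 q b s j (cnj z))
                 * minv (Khat1 q b s j) * Theta1 q b s j (complex_of_real a))"
proof -
  obtain m where j: "j = Suc m" using \<open>1 \<le> j\<close> by (cases j) auto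
  have "m + 1 \<le> n" using \<open>j \<le> n\<close> j by simp
  then have "det (K1 q b s m) \<noteq> 0" and "det (K1 q b s (Suc m)) \<noteq> 0"
    using K1_leading_block_det[OF \<open>pos_def_mat (K1 q b s n)\<close>] by simp_all
  moreover have "\<forall>i \<le> 2 * (m + 1) + 1. s i \<in> carrier_mat q q \<and> hermitian_mat (s i)"
    using assms(4) \<open>m + 1 \<le> n\<close> by simp
  ultimately show ?thesis
    unfolding j diff_Suc_1 using \<open>1 \<le> q\<close> by (intro U2_entries_Suc) simp_all
qed

end
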